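(* Fix $\mathbf p\in\mathbb{Z}^2\setminus\{\mathbf0\}$, a positive integer $N$ and $\mathbf a\in\mathcal D$ with $|\mathbf a|<|\mathbf p|$ and $\mathbf a\pm\mathbf p\in\mathcal D$, and suppose $n\ge3$ and $|\widehat{\mathbf a+k\mathbf p}|>|\mathbf p|$ for $k=1,2,\dots,n-1$. If $\lambda^\dagger=\sqrt{-\rho_1(\rho_0+\rho_2)}$ is a positive real number, then there exist real numbers $\lambda_1,\lambda_2>\lambda^\dagger$ such that $\lambda_1$ is an eigenvalue of the Galerkin class matrix $A$ and $\lambda_2$ is an eigenvalue of the Zeitlin class matrix $A'$. Similarly, if $\lambda^\dagger=\sqrt{-\rho_{n-1}(\rho_0+\rho_{n-2})}$ is a positive real number, then there exist real $\lambda_1,\lambda_2>\lambda^\dagger$ with $\lambda_1$ an eigenvalue of $A$ and $\lambda_2$ an eigenvalue of $A'$.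
   Context: $\mathcal D=[-N,N]^2\cap\mathbb{Z}^2$; for $\mathbf k\in\mathbb{Z}^2$, $\widehat{\mathbf k}$ is the unique element of $\mathcal D$ with $\mathbf k-\widehat{\mathbf k}\in(2N+1)\mathbb{Z}^2$. $n=|\{\widehat{\mathbf a+k\mathbf p}:k\in\mathbb{Z}\}|$; $\widehat{\mathbf a+k\mathbf p}$ depends only on $k$ mod $n$. $\rho_k=\frac1{|\mathbf p|^2}-\frac1{|\widehat{\mathbf a+k\mathbf p}|^2}$ for $k\in\mathbb{Z}$. Zeitlin class matrix: $A'$ is $n\times n$, indexed by $0,\dots,n-1$ mod $n$, with $(A')_{j,j+1}=\rho_{j+1}$, $(A')_{j,j-1}=-\rho_{j-1}$ (indices mod $n$), other entries zero. Galerkin class matrix: let $\{k\in\mathbb{Z}:\mathbf a+k\mathbf p\in\mathcal D\}=\{-m_1,\dots,m_2\}$; $A$ is the square matrix indexed by $-m_1,\dots,m_2$ with $A_{j,j+1}=\rho_{j+1}$, $A_{j,j-1}=-\rho_{j-1}$ and all other entries zero (no wrap-around). These are, up to a scalar factor, the linearisations restricted to one class of the Zeitlin sine truncation and of the Galerkin truncation of the 2D Euler equations on the torus about the equilibrium whose only nonzero Fourier coefficients sit at $\pm\mathbf p$. *)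

theory Defs
  imports Complex_Main "Jordan_Normal_Form.Char_Poly"
begin

definition Dom :: "int \<Rightarrow> (int \<times> int) set" where
  "Dom N = {(x, y). \<bar>x\<bar> \<le> N \<and> \<bar>y\<bar> \<le> N}"

text \<open>hat k: the unique element of D congruent to k modulo (2N+1)Z^2.\<close>
definition hat :: "int \<Rightarrow> int \<times> int \<Rightarrow> int \<times> int" where
  "hat N k = ((fst k + N) mod (2*N+1) - N, (snd k + N) mod (2*N+1) - N)"

definition nsq :: "int \<times> int \<Rightarrow> real" where
  "nsq k = real_of_int (fst k ^ 2 + snd k ^ 2)"

definition lpt :: "int \<times> int \<Rightarrow> int \<Rightarrow> int \<times> int \<Rightarrow> int \<times> int" where
  "lpt a k p = (fst a + k * fst p, snd a + k * snd p)"

definition ncls :: "int \<Rightarrow> int \<times> int \<Rightarrow> int \<times> int \<Rightarrow> nat" where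
  "ncls N a p = card {hat N (lpt a k p) | k. True}"

definition rho :: "int \<Rightarrow> int \<times> int \<Rightarrow> int \<times> int \<Rightarrow> int \<Rightarrow> real" where
  "rho N a p k = 1 / nsq p - 1 / nsq (hat N (lpt a k p))"

definition zeitlin_mat :: "int \<Rightarrow> int \<times> int \<Rightarrow> int \<times> int \<Rightarrow> real mat" where
  "zeitlin_mat N a p = (let n = ncls N a p in
     mat n n (\<lambda>(i, j).
       if j = (i + 1) mod n then rho N a p (int i + 1)
       else if j = (i + n - 1) mod n then - rho N a p (int i - 1)
       else 0))"

text \<open>{k. a + k p \<in> D} = {-m1..m2}.\<close>
definition gal_m1 :: "int \<Rightarrow> int \<times> int \<Rightarrow> int \<times> int \<Rightarrow> int" where
  "gal_m1 N a p = - Min {k. lpt a k p \<in> Dom N}"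

definition gal_m2 :: "int \<Rightarrow> int \<times> int \<Rightarrow> int \<times> int \<Rightarrow> int" where
  "gal_m2 N a p = Max {k. lpt a k p \<in> Dom N}"

text \<open>Galerkin class matrix A, indexed by -m1..m2; row/column i of the
  Isabelle matrix corresponds to index i - m1.\<close>
definition galerkin_mat :: "int \<Rightarrow> int \<times> int \<Rightarrow> int \<times> int \<Rightarrow> real mat" where
  "galerkin_mat N a p = (let m1 = gal_m1 N a p; m2 = gal_m2 N a p;
       sz = nat (m1 + m2 + 1) in
     mat sz sz (\<lambda>(i, j).
       if j = i + 1 then rho N a p (int i - m1 + 1)
       else if i = j + 1 then - rho N a p (int i - m1 - 1)
       else 0))"

end

theory Submission
  imports Defs "HOL-Analysis.Function_Topology" "HOL-Library.Periodic_Fun"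
begin

text \<open>Both class matrices are of the form \<open>M * diag \<sigma>\<close> with \<open>M\<close> skew-symmetric (the
  nearest-neighbour matrix of a cycle, resp. of a path) and \<open>\<sigma>\<close> the values of \<open>\<rho>\<close>, which by
  hypothesis are positive except at the index of \<open>a\<close>, where \<open>\<rho>\<^sub>0 < 0\<close> is forced by
  \<open>\<lambda>\<^sup>\<dagger> > 0\<close>. For such a matrix a variational principle produces real eigenvalues: if \<open>-\<mu>\<close>
  is the minimum of \<open>E(t) = \<Sum> \<sigma>\<^sub>j (M t)\<^sub>j\<^sup>2\<close> over vectors vanishing at the negative index with
  \<open>W(t) = \<Sum> t\<^sub>j\<^sup>2 / \<sigma>\<^sub>j = 1\<close>, and \<open>\<mu> > 0\<close>, then \<open>sqrt \<mu>\<close> is an eigenvalue.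
  The unit vector at the neighbour \<open>a + p\<close> (resp. \<open>a - p\<close>) satisfies
  \<open>E + (\<lambda>\<^sup>\<dagger>)\<^sup>2 W \<le> 0\<close>, so \<open>\<mu> \<ge> (\<lambda>\<^sup>\<dagger>)\<^sup>2\<close>; it is not a minimiser because its mixed term
  with the unit vector at the other neighbour of \<open>a\<close> is \<open>-\<rho>\<^sub>0\<close> (or \<open>-\<rho>\<^sub>0 - \<rho>\<^sub>2\<close> on a 4-cycle),
  which is nonzero. Hence \<open>\<mu> > (\<lambda>\<^sup>\<dagger>)\<^sup>2\<close>.\<close>

section \<open>Skew-symmetric matrices times an indefinite diagonal matrix\<close>

lemma linear_coeff_eq_0_if_quadratic_nonneg:
  fixes b c :: real
  assumes "\<And>e. 0 \<le> 2 * e * b + e\<^sup>2 * c"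
  shows "b = 0"
proof -
  define d where "d = \<bar>c\<bar> + 1"
  have d: "d > 0" "c - 2 * d < 0" unfolding d_def by auto
  have "0 \<le> 2 * (- b / d) * b + (- b / d)\<^sup>2 * c" by (rule assms)
  also have "\<dots> = b\<^sup>2 * (c - 2 * d) / d\<^sup>2" using d by (simp add: field_simps power2_eq_square)
  finally have "0 \<le> b\<^sup>2 * (c - 2 * d)" using d by (simp add: zero_le_divide_iff)
  then show ?thesis using d by (auto simp: zero_le_mult_iff)
qed

definition std_basis :: "nat \<Rightarrow> nat \<Rightarrow> real" where
  "std_basis k j = (if j = k then 1 else 0)"

text \<open>Vectors are functions \<open>nat \<Rightarrow> real\<close> restricted to \<open>{..<s}\<close>; the matrix under study is
  \<open>mat s s (\<lambda>(i, j). M i j * \<sigma> j)\<close>.\<close>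

locale skew_signed_diag =
  fixes s :: nat and M :: "nat \<Rightarrow> nat \<Rightarrow> real" and \<sigma> :: "nat \<Rightarrow> real" and i0 :: nat
  assumes skew: "\<And>i j. i < s \<Longrightarrow> j < s \<Longrightarrow> M j i = - M i j"
    and i0_less: "i0 < s" and \<sigma>_i0_neg: "\<sigma> i0 < 0"
    and \<sigma>_pos: "\<And>j. j < s \<Longrightarrow> j \<noteq> i0 \<Longrightarrow> 0 < \<sigma> j"
begin

definition matvec :: "(nat \<Rightarrow> real) \<Rightarrow> nat \<Rightarrow> real" where
  "matvec t i = (\<Sum>j<s. M i j * t j)"

definition supported :: "(nat \<Rightarrow> real) \<Rightarrow> bool" where
  "supported t \<longleftrightarrow> (\<forall>j. s \<le> j \<or> j = i0 \<longrightarrow> t j = 0)"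

definition energy :: "(nat \<Rightarrow> real) \<Rightarrow> real" where
  "energy t = (\<Sum>j<s. \<sigma> j * (matvec t j)\<^sup>2)"

definition mass :: "(nat \<Rightarrow> real) \<Rightarrow> real" where
  "mass t = (\<Sum>j\<in>{..<s} - {i0}. (t j)\<^sup>2 / \<sigma> j)"

definition qform :: "real \<Rightarrow> (nat \<Rightarrow> real) \<Rightarrow> real" where
  "qform \<mu> t = energy t + \<mu> * mass t"

definition qform_polar :: "real \<Rightarrow> (nat \<Rightarrow> real) \<Rightarrow> (nat \<Rightarrow> real) \<Rightarrow> real" where
  "qform_polar \<mu> t h =
     (\<Sum>j<s. \<sigma> j * matvec t j * matvec h j) + \<mu> * (\<Sum>j\<in>{..<s} - {i0}. t j * h j / \<sigma> j)"

lemma \<sigma>_nonzero: "j < s \<Longrightarrow> \<sigma> j \<noteq> 0"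
  using \<sigma>_pos[of j] \<sigma>_i0_neg by (cases "j = i0") auto

lemma matvec_add_scaled: "matvec (\<lambda>j. t j + e * h j) i = matvec t i + e * matvec h i"
  unfolding matvec_def by (simp add: algebra_simps sum.distrib sum_distrib_left)

lemma matvec_scaled: "matvec (\<lambda>j. r * t j) i = r * matvec t i"
  unfolding matvec_def by (simp add: algebra_simps sum_distrib_left)

lemma matvec_std_basis: "k < s \<Longrightarrow> matvec (std_basis k) i = M i k"
  unfolding matvec_def std_basis_def by (simp add: if_distrib cong: if_cong)

lemma energy_scaled: "energy (\<lambda>j. r * t j) = r\<^sup>2 * energy t"
  unfolding energy_def matvec_scaled
  by (simp add: sum_distrib_left power_mult_distrib algebra_simps)

lemma mass_scaled: "mass (\<lambda>j. r * t j) = r\<^sup>2 * mass t"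
  unfolding mass_def by (simp add: sum_distrib_left power_mult_distrib algebra_simps)

lemma qform_add_scaled:
  "qform \<mu> (\<lambda>j. t j + e * h j) = qform \<mu> t + 2 * e * qform_polar \<mu> t h + e\<^sup>2 * qform \<mu> h"
proof -
  have "energy (\<lambda>j. t j + e * h j)
      = energy t + 2 * e * (\<Sum>j<s. \<sigma> j * matvec t j * matvec h j) + e\<^sup>2 * energy h"
    unfolding energy_def matvec_add_scaled
    by (simp add: sum.distrib sum_distrib_left power2_eq_square algebra_simps)
  moreover have "mass (\<lambda>j. t j + e * h j)
      = mass t + 2 * e * (\<Sum>j\<in>{..<s} - {i0}. t j * h j / \<sigma> j) + e\<^sup>2 * mass h"
    unfolding mass_def
    by (simp add: sum.distrib sum_distrib_left power2_eq_square algebra_simps add_divide_distrib)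
  ultimately show ?thesis unfolding qform_def qform_polar_def by (simp add: algebra_simps)
qed

lemma supported_add_scaled: "supported t \<Longrightarrow> supported h \<Longrightarrow> supported (\<lambda>j. t j + e * h j)"
  unfolding supported_def by auto

lemma supported_std_basis: "k < s \<Longrightarrow> k \<noteq> i0 \<Longrightarrow> supported (std_basis k)"
  unfolding supported_def std_basis_def by auto

lemma qform_polar_eq_0_at_zero:
  assumes nonneg: "\<And>t. supported t \<Longrightarrow> 0 \<le> qform \<mu> t"
    and z: "supported z" "qform \<mu> z = 0" and h: "supported h"
  shows "qform_polar \<mu> z h = 0"
proof (rule linear_coeff_eq_0_if_quadratic_nonneg)
  fix e :: real
  have "0 \<le> qform \<mu> (\<lambda>j. z j + e * h j)"
    using nonneg supported_add_scaled z(1) h by blast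
  then show "0 \<le> 2 * e * qform_polar \<mu> z h + e\<^sup>2 * qform \<mu> h"
    unfolding qform_add_scaled z(2) by simp
qed

lemma mass_term_le: "j < s \<Longrightarrow> j \<noteq> i0 \<Longrightarrow> (t j)\<^sup>2 / \<sigma> j \<le> mass t"
  unfolding mass_def using \<sigma>_pos by (intro member_le_sum) (auto intro!: divide_nonneg_pos)

lemma mass_nonneg: "0 \<le> mass t"
  unfolding mass_def using \<sigma>_pos by (intro sum_nonneg) (auto intro!: divide_nonneg_pos)

lemma mass_eq_0_imp_zero:
  assumes "supported t" "mass t = 0"
  shows "t j = 0"
proof (cases "j < s \<and> j \<noteq> i0")
  case True
  then have "(t j)\<^sup>2 / \<sigma> j \<le> 0" using mass_term_le assms(2) by metis
  with True \<sigma>_pos[of j] show ?thesis by (simp add: divide_le_0_iff)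
next
  case False
  then show ?thesis using assms(1) unfolding supported_def by auto
qed

lemma continuous_energy: "continuous_on UNIV energy"
  unfolding energy_def matvec_def by (intro continuous_intros continuous_on_product_coordinates)

lemma continuous_mass: "continuous_on UNIV mass"
  unfolding mass_def divide_inverse by (intro continuous_intros continuous_on_product_coordinates)

lemma compact_supported_mass_sphere: "compact {t. supported t \<and> mass t = 1}"
proof -
  define S where "S j = (if j < s \<and> j \<noteq> i0 then {- sqrt (\<sigma> j) .. sqrt (\<sigma> j)} else {0 :: real})"
    for j
  have "compactin (product_topology (\<lambda>_. euclidean) UNIV) (PiE UNIV S)"
    unfolding compactin_PiE S_def by auto
  then have compact_box: "compact (PiE UNIV S)"
    unfolding euclidean_product_topology by simp
  have closed_supported: "closed {t :: nat \<Rightarrow> real. supported t}"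
    unfolding supported_def
    by (intro closed_Collect_all closed_Collect_imp closed_Collect_eq)
       (auto intro: continuous_on_product_coordinates)
  have "closed {t. mass t = 1}"
    by (rule closed_Collect_eq) (auto intro: continuous_mass)
  then have closed: "closed {t. supported t \<and> mass t = 1}"
    using closed_supported by (simp add: Collect_conj_eq closed_Int)
  have "{t. supported t \<and> mass t = 1} \<subseteq> PiE UNIV S"
  proof (intro subsetI PiE_I)
    fix t j assume "t \<in> {t. supported t \<and> mass t = 1}"
    then have t: "supported t" "mass t = 1" by auto
    show "t j \<in> S j"
    proof (cases "j < s \<and> j \<noteq> i0")
      case True
      then have "(t j)\<^sup>2 \<le> \<sigma> j"
        using mass_term_le[of j t] \<sigma>_pos[of j] t(2) by (simp add: divide_le_eq)
      then have "\<bar>t j\<bar> \<le> sqrt (\<sigma> j)" using real_sqrt_le_mono by fastforce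
      then show ?thesis using True unfolding S_def by auto
    qed (use t(1) in \<open>auto simp: supported_def S_def\<close>)
  qed auto
  then show ?thesis using compact_Int_closed[OF compact_box closed] by (simp add: Int_absorb1)
qed

text \<open>\<open>- \<mu>\<close> is the minimum of the energy on the compact sphere \<open>mass t = 1\<close>.\<close>
lemma qform_minimizer_exists:
  assumes "supported t0" "mass t0 > 0"
  obtains z \<mu> where "supported z" "mass z = 1" "energy z + \<mu> = 0"
    "\<And>t. supported t \<Longrightarrow> 0 \<le> qform \<mu> t"
proof -
  define K where "K = {t. supported t \<and> mass t = 1}"
  have normalize: "(\<lambda>j. r * t j) \<in> K" if "supported t" "mass t > 0" "r = 1 / sqrt (mass t)" for t r
    using that mass_scaled[of r t] unfolding K_def supported_def by (auto simp: power_divide)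
  then have "K \<noteq> {}" using assms by blast
  then obtain z where z: "z \<in> K" and z_min: "\<And>y. y \<in> K \<Longrightarrow> energy z \<le> energy y"
    using continuous_attains_inf[OF compact_supported_mass_sphere[folded K_def]]
      continuous_on_subset[OF continuous_energy] by blast
  have "0 \<le> qform (- energy z) t" if t: "supported t" for t
  proof (cases "mass t = 0")
    case True
    then have "\<And>j. t j = 0" using mass_eq_0_imp_zero t by blast
    then show ?thesis using True unfolding qform_def energy_def matvec_def by simp
  next
    case False
    then have pos: "mass t > 0" using mass_nonneg[of t] by linarith
    define r where "r = 1 / sqrt (mass t)"
    have "energy z \<le> r\<^sup>2 * energy t"
      using z_min[OF normalize[OF t pos r_def]] energy_scaled by metis
    moreover have "r\<^sup>2 = 1 / mass t" using pos unfolding r_def by (simp add: power_divide)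
    ultimately show ?thesis using pos unfolding qform_def by (simp add: field_simps)
  qed
  with z that[of z "- energy z"] show ?thesis unfolding K_def by auto
qed

lemma skew_bilinear_self_eq_0: "(\<Sum>k<s. x k * matvec x k) = 0"
proof -
  define S where "S = (\<Sum>k<s. \<Sum>l<s. x k * M k l * x l)"
  have "S = (\<Sum>l<s. \<Sum>k<s. x k * M k l * x l)" unfolding S_def by (rule sum.swap)
  also have "\<dots> = (\<Sum>l<s. \<Sum>k<s. - (x l * M l k * x k))"
  proof (rule sum.cong[OF refl], rule sum.cong[OF refl])
    fix l k assume "l \<in> {..<s}" "k \<in> {..<s}"
    then show "x k * M k l * x l = - (x l * M l k * x k)" using skew[of l k] by simp
  qed
  finally have "S = - S" unfolding S_def by (simp add: sum_negf)
  moreover have "(\<Sum>k<s. x k * matvec x k) = S"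
    unfolding matvec_def S_def by (simp add: sum_distrib_left mult.assoc)
  ultimately show ?thesis by simp
qed

lemma matvec_eq_neg_transpose:
  assumes "k < s"
  shows "matvec y k = - (\<Sum>j<s. y j * M j k)"
  unfolding matvec_def sum_negf[symmetric]
proof (rule sum.cong[OF refl])
  fix j assume "j \<in> {..<s}"
  then show "M k j * y j = - (y j * M j k)" using skew[of j k] assms by simp
qed

lemma sum_mult_std_basis: "k < s \<Longrightarrow> k \<noteq> i0 \<Longrightarrow>
    (\<Sum>j\<in>{..<s} - {i0}. t j * std_basis k j / \<sigma> j) = t k / \<sigma> k"
proof -
  assume k: "k < s" "k \<noteq> i0"
  have "(\<Sum>j\<in>{..<s} - {i0}. t j * std_basis k j / \<sigma> j)
      = (\<Sum>j\<in>{..<s} - {i0}. if j = k then t k / \<sigma> k else 0)"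
    by (rule sum.cong) (auto simp: std_basis_def)
  then show ?thesis using k by (simp add: sum.delta)
qed

lemma minimizer_stationary:
  assumes z: "supported z" "energy z + \<mu> = 0" "mass z = 1"
    and nonneg: "\<And>t. supported t \<Longrightarrow> 0 \<le> qform \<mu> t"
    and k: "k < s" "k \<noteq> i0"
  shows "matvec (\<lambda>j. \<sigma> j * matvec z j) k = \<mu> * z k / \<sigma> k"
proof -
  have "qform_polar \<mu> z (std_basis k) = 0"
    using qform_polar_eq_0_at_zero[OF nonneg z(1) _ supported_std_basis[OF k]] z
    unfolding qform_def by simp
  then have "(\<Sum>j<s. \<sigma> j * matvec z j * M j k) + \<mu> * (z k / \<sigma> k) = 0"
    by (simp add: qform_polar_def matvec_std_basis[OF k(1)] sum_mult_std_basis[OF k])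
  then show ?thesis using matvec_eq_neg_transpose[OF k(1), of "\<lambda>j. \<sigma> j * matvec z j"] by simp
qed

text \<open>At the excluded index the stationarity equation holds too: this uses skewness of \<open>M\<close>
  twice and \<open>\<mu> > 0\<close> to rule out \<open>\<sigma> i0 * matvec z i0 = 0\<close>.\<close>
lemma minimizer_stationary_i0:
  assumes z: "supported z" "energy z + \<mu> = 0" "mass z = 1"
    and nonneg: "\<And>t. supported t \<Longrightarrow> 0 \<le> qform \<mu> t" and "0 < \<mu>"
  shows "matvec (\<lambda>j. \<sigma> j * matvec z j) i0 = 0"
proof -
  define q where "q = (\<lambda>j. \<sigma> j * matvec z j)"
  have fin: "finite {..<s}" and i0: "i0 \<in> {..<s}" using i0_less by auto
  have z_i0: "z i0 = 0" using z(1) unfolding supported_def by simp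
  have "(\<Sum>k\<in>{..<s} - {i0}. q k * matvec q k) = \<mu> * (\<Sum>k\<in>{..<s} - {i0}. z k * matvec z k)"
    unfolding sum_distrib_left
  proof (rule sum.cong[OF refl])
    fix k assume "k \<in> {..<s} - {i0}"
    then have "matvec q k = \<mu> * z k / \<sigma> k" "\<sigma> k \<noteq> 0"
      using minimizer_stationary[OF z nonneg] \<sigma>_nonzero unfolding q_def by auto
    then show "q k * matvec q k = \<mu> * (z k * matvec z k)" unfolding q_def by simp
  qed
  also have "(\<Sum>k\<in>{..<s} - {i0}. z k * matvec z k) = 0"
    using sum.remove[OF fin i0, of "\<lambda>k. z k * matvec z k"] skew_bilinear_self_eq_0 z_i0 by simp
  finally have "q i0 * matvec q i0 = 0"
    using sum.remove[OF fin i0, of "\<lambda>k. q k * matvec q k"] skew_bilinear_self_eq_0 by simp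
  moreover have "q i0 \<noteq> 0"
  proof
    assume "q i0 = 0"
    then have "matvec z i0 = 0" using \<sigma>_i0_neg unfolding q_def by simp
    then have "energy z = (\<Sum>j\<in>{..<s} - {i0}. \<sigma> j * (matvec z j)\<^sup>2)"
      using sum.remove[OF fin i0, of "\<lambda>j. \<sigma> j * (matvec z j)\<^sup>2"] unfolding energy_def by simp
    also have "\<dots> \<ge> 0" using \<sigma>_pos by (intro sum_nonneg) (simp add: less_imp_le)
    finally show False using z(2) \<open>0 < \<mu>\<close> by simp
  qed
  ultimately show ?thesis unfolding q_def by simp
qed

lemma eigenvalue_of_scaled_eigenvector:
  assumes u: "\<And>i. i < s \<Longrightarrow> matvec u i = l * u i / \<sigma> i" and nonzero: "i < s" "u i \<noteq> 0"
  shows "eigenvalue (mat s s (\<lambda>(i, j). M i j * \<sigma> j)) l"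
proof -
  define A where "A = mat s s (\<lambda>(i, j). M i j * \<sigma> j)"
  define x where "x = vec s (\<lambda>j. u j / \<sigma> j)"
  have "A *\<^sub>v x = l \<cdot>\<^sub>v x"
  proof (rule eq_vecI)
    fix i assume "i < dim_vec (l \<cdot>\<^sub>v x)"
    then have i: "i < s" unfolding x_def by simp
    have "(A *\<^sub>v x) $ i = (\<Sum>j<s. M i j * \<sigma> j * (u j / \<sigma> j))"
      unfolding A_def x_def using i by (simp add: scalar_prod_def lessThan_atLeast0)
    also have "\<dots> = matvec u i" unfolding matvec_def by (rule sum.cong) (auto simp: \<sigma>_nonzero)
    finally show "(A *\<^sub>v x) $ i = (l \<cdot>\<^sub>v x) $ i" using u[OF i] i unfolding x_def by simp
  qed (simp add: A_def x_def)
  moreover have "x \<noteq> 0\<^sub>v s"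
  proof
    assume "x = 0\<^sub>v s"
    then have "u i / \<sigma> i = 0" using nonzero(1) unfolding x_def by (metis index_vec index_zero_vec(1))
    then show False using nonzero \<sigma>_nonzero[OF nonzero(1)] by simp
  qed
  ultimately have "eigenvector A x l" unfolding eigenvector_def A_def x_def by simp
  then show ?thesis unfolding eigenvalue_def A_def by blast
qed

text \<open>With \<open>q = diag \<sigma> * M * z\<close> and \<open>l = sqrt \<mu>\<close>, the vector \<open>u = l z + q\<close> satisfies
  \<open>M u = l * diag \<sigma>\<inverse> u\<close>, so \<open>diag \<sigma>\<inverse> u\<close> is an eigenvector of \<open>M * diag \<sigma>\<close>.\<close>
lemma eigenvalue_sqrt_of_minimizer:
  assumes z: "supported z" "energy z + \<mu> = 0" "mass z = 1"
    and nonneg: "\<And>t. supported t \<Longrightarrow> 0 \<le> qform \<mu> t" and "0 < \<mu>"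
  shows "eigenvalue (mat s s (\<lambda>(i, j). M i j * \<sigma> j)) (sqrt \<mu>)"
proof -
  define l where "l = sqrt \<mu>"
  have l: "l\<^sup>2 = \<mu>" "0 < l" using \<open>0 < \<mu>\<close> unfolding l_def by auto
  define q where "q = (\<lambda>j. \<sigma> j * matvec z j)"
  define u where "u = (\<lambda>j. l * z j + q j)"
  have z_i0: "z i0 = 0" using z(1) unfolding supported_def by simp
  have Mu: "matvec u i = l * u i / \<sigma> i" if i: "i < s" for i
  proof -
    have Mz: "matvec z i = q i / \<sigma> i" using \<sigma>_nonzero[OF i] unfolding q_def by simp
    have "matvec u i = l * matvec z i + matvec q i"
      unfolding u_def matvec_def by (simp add: algebra_simps sum.distrib sum_distrib_left)
    also have "\<dots> = l * u i / \<sigma> i"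
    proof (cases "i = i0")
      case True
      then show ?thesis
        using minimizer_stationary_i0[OF assms] z_i0 Mz \<sigma>_i0_neg unfolding u_def q_def by simp
    next
      case False
      then show ?thesis
        using minimizer_stationary[OF z nonneg i False] Mz l(1) \<sigma>_nonzero[OF i]
        unfolding u_def q_def by (simp add: field_simps power2_eq_square)
    qed
    finally show ?thesis .
  qed
  have "\<exists>i<s. u i \<noteq> 0"
  proof (rule ccontr)
    assume "\<not> ?thesis"
    then have q_eq: "\<sigma> k * matvec z k = - l * z k" if "k < s" for k
      using that unfolding u_def q_def by (auto simp: add_eq_0_iff)
    have "matvec z k = - l * z k / \<sigma> k" if "k < s" for k
      using q_eq[OF that] \<sigma>_nonzero[OF that] by (simp add: field_simps mult.commute)
    then have "z k * matvec z k = - l * ((z k)\<^sup>2 / \<sigma> k)" if "k < s" for k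
      using that by (simp add: power2_eq_square)
    then have "(\<Sum>k<s. z k * matvec z k) = - l * (\<Sum>k<s. (z k)\<^sup>2 / \<sigma> k)"
      by (simp add: sum_distrib_left)
    also have "(\<Sum>k<s. (z k)\<^sup>2 / \<sigma> k) = (z i0)\<^sup>2 / \<sigma> i0 + mass z"
      unfolding mass_def using i0_less by (intro sum.remove) auto
    finally show False using skew_bilinear_self_eq_0 z_i0 z(3) l(2) by simp
  qed
  then show ?thesis using eigenvalue_of_scaled_eigenvector[OF Mu] unfolding l_def by blast
qed

theorem eigenvalue_gt_of_test_vectors:
  assumes "0 \<le> c" and t: "supported t" "qform (c\<^sup>2) t \<le> 0"
    and h: "supported h" "qform_polar (c\<^sup>2) t h \<noteq> 0"
  shows "\<exists>l>c. eigenvalue (mat s s (\<lambda>(i, j). M i j * \<sigma> j)) l"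
proof -
  have "mass t \<noteq> 0"
  proof
    assume "mass t = 0"
    then have "\<And>j. t j = 0" using mass_eq_0_imp_zero t(1) by blast
    then show False using h(2) unfolding qform_polar_def matvec_def by simp
  qed
  then have mass_t: "mass t > 0" using mass_nonneg[of t] by linarith
  obtain z \<mu> where z: "supported z" "mass z = 1" "energy z + \<mu> = 0"
    and nonneg: "\<And>t. supported t \<Longrightarrow> 0 \<le> qform \<mu> t"
    using qform_minimizer_exists[OF t(1) mass_t] by blast
  have qform_t: "qform \<mu> t = qform (c\<^sup>2) t + (\<mu> - c\<^sup>2) * mass t"
    unfolding qform_def by (simp add: algebra_simps)
  then have "0 \<le> (\<mu> - c\<^sup>2) * mass t" using nonneg[OF t(1)] t(2) by linarith
  then have "c\<^sup>2 \<le> \<mu>" using mass_t by (simp add: zero_le_mult_iff)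
  moreover have "\<mu> \<noteq> c\<^sup>2"
  proof
    assume "\<mu> = c\<^sup>2"
    then have "qform \<mu> t = 0" using nonneg[OF t(1)] t(2) by simp
    then have "qform_polar \<mu> t h = 0" using qform_polar_eq_0_at_zero[OF nonneg t(1) _ h(1)] by simp
    then show False using h(2) \<open>\<mu> = c\<^sup>2\<close> by simp
  qed
  ultimately have "c\<^sup>2 < \<mu>" by simp
  then have "c < sqrt \<mu>" using \<open>0 \<le> c\<close> real_less_rsqrt by blast
  moreover have "0 < \<mu>" using \<open>c\<^sup>2 < \<mu>\<close> by (rule le_less_trans[OF zero_le_power2])
  ultimately show ?thesis using eigenvalue_sqrt_of_minimizer[OF z(1,3,2) nonneg] by blast
qed

corollary eigenvalue_gt_of_std_basis:
  assumes "0 \<le> c" "k < s" "h < s" "k \<noteq> i0" "h \<noteq> i0" "k \<noteq> h"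
    and "(\<Sum>j<s. \<sigma> j * (M j k)\<^sup>2) + c\<^sup>2 / \<sigma> k \<le> 0"
    and "(\<Sum>j<s. \<sigma> j * M j k * M j h) \<noteq> 0"
  shows "\<exists>l>c. eigenvalue (mat s s (\<lambda>(i, j). M i j * \<sigma> j)) l"
proof (rule eigenvalue_gt_of_test_vectors)
  have "mass (std_basis k) = (\<Sum>j\<in>{..<s} - {i0}. std_basis k j * std_basis k j / \<sigma> j)"
    unfolding mass_def power2_eq_square ..
  also have "\<dots> = 1 / \<sigma> k"
    using sum_mult_std_basis[OF assms(2,4), of "std_basis k"] by (simp add: std_basis_def)
  finally have "mass (std_basis k) = 1 / \<sigma> k" .
  then show "qform (c\<^sup>2) (std_basis k) \<le> 0"
    using assms(2,7) unfolding qform_def energy_def matvec_std_basis[OF assms(2)] by simp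
  have "(\<Sum>j\<in>{..<s} - {i0}. std_basis k j * std_basis h j / \<sigma> j) = 0"
    using assms(6) by (intro sum.neutral) (auto simp: std_basis_def)
  then show "qform_polar (c\<^sup>2) (std_basis k) (std_basis h) \<noteq> 0"
    using assms(8) unfolding qform_polar_def matvec_std_basis[OF assms(2)]
      matvec_std_basis[OF assms(3)] by simp
qed (use assms supported_std_basis in auto)

end

section \<open>Nearest-neighbour skew matrices on a cycle and on a path\<close>

definition cyc_next :: "nat \<Rightarrow> nat \<Rightarrow> nat" where
  "cyc_next n i = (if i + 1 = n then 0 else i + 1)"

definition cyc_prev :: "nat \<Rightarrow> nat \<Rightarrow> nat" where
  "cyc_prev n i = (if i = 0 then n - 1 else i - 1)"

definition cyc_skew :: "nat \<Rightarrow> nat \<Rightarrow> nat \<Rightarrow> real" where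
  "cyc_skew n i j = (if j = cyc_next n i then 1 else if j = cyc_prev n i then - 1 else 0)"

definition path_skew :: "nat \<Rightarrow> nat \<Rightarrow> real" where
  "path_skew i j = (if j = i + 1 then 1 else if i = j + 1 then - 1 else 0)"

lemma cyc_next_less: "i < n \<Longrightarrow> cyc_next n i < n"
  unfolding cyc_next_def by auto

lemma cyc_prev_less: "0 < n \<Longrightarrow> i < n \<Longrightarrow> cyc_prev n i < n"
  unfolding cyc_prev_def by auto

lemma cyc_prev_ne_next: "3 \<le> n \<Longrightarrow> i < n \<Longrightarrow> cyc_prev n i \<noteq> cyc_next n i"
  unfolding cyc_prev_def cyc_next_def by auto

lemma cyc_skew_antisym: "3 \<le> n \<Longrightarrow> i < n \<Longrightarrow> j < n \<Longrightarrow> cyc_skew n j i = - cyc_skew n i j"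
  unfolding cyc_skew_def cyc_next_def cyc_prev_def by auto

lemma cyc_skew_column_sq_sum:
  assumes n: "3 \<le> n" and k: "k < n"
  shows "(\<Sum>j<n. \<sigma> j * (cyc_skew n j k)\<^sup>2) = \<sigma> (cyc_prev n k) + \<sigma> (cyc_next n k)"
proof -
  have "(\<Sum>j<n. \<sigma> j * (cyc_skew n j k)\<^sup>2)
      = (\<Sum>j<n. (if j = cyc_prev n k then \<sigma> j else 0) + (if j = cyc_next n k then \<sigma> j else 0))"
  proof (rule sum.cong[OF refl])
    fix j assume "j \<in> {..<n}"
    then have "(cyc_skew n j k)\<^sup>2 = (cyc_skew n k j)\<^sup>2" using cyc_skew_antisym[OF n k] by simp
    then show "\<sigma> j * (cyc_skew n j k)\<^sup>2
        = (if j = cyc_prev n k then \<sigma> j else 0) + (if j = cyc_next n k then \<sigma> j else 0)"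
      using cyc_prev_ne_next[OF n k] unfolding cyc_skew_def by auto
  qed
  then show ?thesis using n k cyc_prev_less cyc_next_less by (simp add: sum.distrib)
qed

lemma cyc_skew_1: "3 \<le> n \<Longrightarrow> cyc_skew n 1 j = (if j = 2 then 1 else if j = 0 then - 1 else 0)"
  unfolding cyc_skew_def cyc_next_def cyc_prev_def by simp

lemma cyc_skew_last:
  "3 \<le> n \<Longrightarrow> cyc_skew n (n - 1) j = (if j = 0 then 1 else if j = n - 2 then - 1 else 0)"
  unfolding cyc_skew_def cyc_next_def cyc_prev_def by auto

text \<open>For \<open>n = 4\<close> the neighbours \<open>1\<close> and \<open>3\<close> of \<open>0\<close> have the second common neighbour \<open>2\<close>.\<close>
lemma cyc_skew_cross_sum:
  assumes n: "3 \<le> n"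
  shows "(\<Sum>j<n. \<sigma> j * cyc_skew n j 1 * cyc_skew n j (n - 1)) = - \<sigma> 0 - (if n = 4 then \<sigma> 2 else 0)"
proof -
  have "(\<Sum>j<n. \<sigma> j * cyc_skew n j 1 * cyc_skew n j (n - 1))
      = (\<Sum>j<n. (if j = 0 then - \<sigma> j else 0) + (if j = 2 \<and> n = 4 then - \<sigma> j else 0))"
  proof (rule sum.cong[OF refl])
    fix j assume j: "j \<in> {..<n}"
    have "cyc_skew n j 1 = - (if j = 2 then 1 else if j = 0 then - 1 else 0)"
      using cyc_skew_antisym[OF n, of 1 j] j n unfolding cyc_skew_1[OF n] by simp
    moreover have "cyc_skew n j (n - 1) = - (if j = 0 then 1 else if j = n - 2 then - 1 else 0)"
      using cyc_skew_antisym[OF n, of "n - 1" j] j n unfolding cyc_skew_last[OF n] by simp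
    ultimately show "\<sigma> j * cyc_skew n j 1 * cyc_skew n j (n - 1)
        = (if j = 0 then - \<sigma> j else 0) + (if j = 2 \<and> n = 4 then - \<sigma> j else 0)"
      using n by auto
  qed
  then show ?thesis using n by (simp add: sum.distrib)
qed

lemma path_skew_column_sq_sum:
  assumes "k < s"
  shows "(\<Sum>j<s. \<sigma> j * (path_skew j k)\<^sup>2)
    = (if 0 < k then \<sigma> (k - 1) else 0) + (if k + 1 < s then \<sigma> (k + 1) else 0)"
proof -
  have "(\<Sum>j<s. \<sigma> j * (path_skew j k)\<^sup>2)
      = (\<Sum>j<s. if j = k - 1 \<and> 0 < k then \<sigma> j else 0) + (\<Sum>j<s. if j = k + 1 then \<sigma> j else 0)"
    unfolding sum.distrib[symmetric] by (intro sum.cong) (auto simp: path_skew_def)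
  then show ?thesis using assms by (simp add: sum.delta sum.If_cases)
qed

lemma path_skew_cross_sum:
  assumes "0 < i" "i + 1 < s"
  shows "(\<Sum>j<s. \<sigma> j * path_skew j (i - 1) * path_skew j (i + 1)) = - \<sigma> i"
proof -
  have "(\<Sum>j<s. \<sigma> j * path_skew j (i - 1) * path_skew j (i + 1))
      = (\<Sum>j\<in>{i}. \<sigma> j * path_skew j (i - 1) * path_skew j (i + 1))"
    using assms by (intro sum.mono_neutral_right) (auto simp: path_skew_def)
  then show ?thesis using assms by (simp add: path_skew_def)
qed

lemma cyc_skew_eigenvalue_gt:
  assumes n: "3 \<le> n" and pos: "\<And>j. 0 < j \<Longrightarrow> j < n \<Longrightarrow> 0 < \<sigma> j" and "0 < c"
    and k: "k = 1 \<or> k = n - 1"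
    and c: "c\<^sup>2 = - \<sigma> k * (\<sigma> (cyc_prev n k) + \<sigma> (cyc_next n k))"
  shows "\<exists>l>c. eigenvalue (mat n n (\<lambda>(i, j). cyc_skew n i j * \<sigma> j)) l"
proof -
  define f where "f = (if k = 1 then 2 else n - 2)"
  have f: "0 < f" "f < n" using n unfolding f_def by auto
  have kn: "0 < k" "k < n" "0 < n - k" "n - k < n" "k \<noteq> n - k" using k n by auto
  have neighbours: "\<sigma> (cyc_prev n k) + \<sigma> (cyc_next n k) = \<sigma> 0 + \<sigma> f"
    using k
  proof
    assume "k = 1"
    then show ?thesis using n unfolding f_def cyc_prev_def cyc_next_def by (simp add: numeral_2_eq_2)
  next
    assume "k = n - 1"
    then show ?thesis using n unfolding f_def cyc_prev_def cyc_next_def by (auto simp: numeral_2_eq_2)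
  qed
  have cross_eq: "(\<Sum>j<n. \<sigma> j * cyc_skew n j k * cyc_skew n j (n - k))
      = - \<sigma> 0 - (if n = 4 then \<sigma> f else 0)"
    using k
  proof
    assume "k = 1"
    then show ?thesis using cyc_skew_cross_sum[OF n, of \<sigma>] unfolding f_def by simp
  next
    assume k: "k = n - 1"
    have "(\<Sum>j<n. \<sigma> j * cyc_skew n j k * cyc_skew n j (n - k))
        = (\<Sum>j<n. \<sigma> j * cyc_skew n j 1 * cyc_skew n j (n - 1))"
      using k n by (simp add: ac_simps)
    then show ?thesis using cyc_skew_cross_sum[OF n, of \<sigma>] k n unfolding f_def by auto
  qed
  have \<sigma>_k: "0 < \<sigma> k" using kn pos by simp
  have "0 < c\<^sup>2" using \<open>0 < c\<close> by simp
  then have S: "\<sigma> 0 + \<sigma> f < 0"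
    using c \<sigma>_k unfolding neighbours by (auto simp: mult_less_0_iff)
  then have \<sigma>_0: "\<sigma> 0 < 0" using pos[OF f] by simp
  interpret skew_signed_diag n "cyc_skew n" \<sigma> 0
  proof
    show "\<And>i j. i < n \<Longrightarrow> j < n \<Longrightarrow> cyc_skew n j i = - cyc_skew n i j"
      using cyc_skew_antisym[OF n] .
  qed (use n \<sigma>_0 pos in auto)
  have cross: "(\<Sum>j<n. \<sigma> j * cyc_skew n j k * cyc_skew n j (n - k)) \<noteq> 0"
    unfolding cross_eq using \<sigma>_0 S by simp
  have col: "(\<Sum>j<n. \<sigma> j * (cyc_skew n j k)\<^sup>2) + c\<^sup>2 / \<sigma> k \<le> 0"
    using cyc_skew_column_sq_sum[OF n kn(2)] c \<sigma>_k by simp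
  show ?thesis
    using eigenvalue_gt_of_std_basis[of c k "n - k"] \<open>0 < c\<close> kn col cross by simp
qed

lemma path_skew_eigenvalue_gt:
  assumes i0: "0 < i0" "i0 + 1 < s" and pos: "\<And>j. j < s \<Longrightarrow> j \<noteq> i0 \<Longrightarrow> 0 < \<sigma> j"
    and "0 < c" and k: "k = i0 + 1 \<or> k + 1 = i0"
    and c: "c\<^sup>2 = - \<sigma> k * (\<sigma> i0 + r)" and "0 < r"
    and far: "\<And>j. j < s \<Longrightarrow> j \<noteq> i0 \<Longrightarrow> j = k + 1 \<or> j + 1 = k \<Longrightarrow> \<sigma> j = r"
  shows "\<exists>l>c. eigenvalue (mat s s (\<lambda>(i, j). path_skew i j * \<sigma> j)) l"
proof -
  have \<sigma>_k: "0 < \<sigma> k" using k i0 pos by auto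
  have "0 < c\<^sup>2" using \<open>0 < c\<close> by simp
  then have "\<sigma> i0 + r < 0" using c \<sigma>_k by (auto simp: mult_less_0_iff)
  then have \<sigma>_i0: "\<sigma> i0 < 0" using \<open>0 < r\<close> by simp
  interpret skew_signed_diag s path_skew \<sigma> i0
    using i0 \<sigma>_i0 pos by unfold_locales (auto simp: path_skew_def)
  have "(\<Sum>j<s. \<sigma> j * (path_skew j k)\<^sup>2) \<le> \<sigma> i0 + r"
    using path_skew_column_sq_sum[of k s \<sigma>] k i0 far[of "k + 1"] far[of "k - 1"] \<open>0 < r\<close> by auto
  then have col: "(\<Sum>j<s. \<sigma> j * (path_skew j k)\<^sup>2) + c\<^sup>2 / \<sigma> k \<le> 0"
    using c \<sigma>_k by simp
  have "(\<Sum>j<s. \<sigma> j * path_skew j k * path_skew j (2 * i0 - k))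
      = (\<Sum>j<s. \<sigma> j * path_skew j (i0 - 1) * path_skew j (i0 + 1))"
    using k by (auto simp: mult.commute mult.left_commute)
  also have "\<dots> = - \<sigma> i0" using path_skew_cross_sum i0 .
  finally have cross: "(\<Sum>j<s. \<sigma> j * path_skew j k * path_skew j (2 * i0 - k)) \<noteq> 0"
    using \<sigma>_i0 by simp
  show ?thesis
    by (rule eigenvalue_gt_of_std_basis[of c k "2 * i0 - k"]) (use \<open>0 < c\<close> k i0 col cross in auto)
qed

section \<open>The class of \<open>a\<close> modulo \<open>(2N+1)\<int>\<^sup>2\<close>\<close>

lemma periodic_mod:
  fixes g :: "int \<Rightarrow> 'a"
  assumes "\<And>k. g (k + d) = g k"
  shows "g (k mod d) = g k"
proof -
  interpret periodic_fun_simple g d by standard (rule assms)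
  have "g (k mod d + of_int (k div d) * d) = g (k mod d)" by (rule plus_of_int)
  then show ?thesis by simp
qed

text \<open>A function on \<open>\<int>\<close> with finite range whose values propagate along translations is
  periodic with period the size of its range: the first repetition among \<open>f 0, \<dots>, f n\<close>
  gives a period \<open>d \<le> n\<close>, and then \<open>f\<close> takes at most \<open>d\<close> values.\<close>
lemma periodic_card_range:
  fixes f :: "int \<Rightarrow> 'a"
  assumes fin: "finite (range f)" and shift: "\<And>i j l. f i = f j \<Longrightarrow> f (i + l) = f (j + l)"
  shows "f (k + int (card (range f))) = f k"
proof -
  define n where "n = card (range f)"
  have "\<not> inj_on f {0..int n}"
  proof
    assume "inj_on f {0..int n}"
    then have "card (f ` {0..int n}) = n + 1" by (simp add: card_image)
    moreover have "card (f ` {0..int n}) \<le> n" unfolding n_def using fin by (intro card_mono) auto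
    ultimately show False by simp
  qed
  then obtain i j where "i \<in> {0..int n}" "j \<in> {0..int n}" "i \<noteq> j" "f i = f j"
    unfolding inj_on_def by blast
  then obtain i j where ij: "0 \<le> i" "i < j" "j \<le> int n" "f i = f j"
    by (cases "i < j") (auto intro: that[of i j] that[of j i])
  define d where "d = j - i"
  have d: "0 < d" "d \<le> int n" using ij unfolding d_def by auto
  have period: "f (k + d) = f k" for k
    using shift[OF ij(4), of "k - i"] unfolding d_def by (simp add: algebra_simps)
  have "range f \<subseteq> f ` {0..<d}"
  proof
    fix y assume "y \<in> range f"
    then obtain k where "y = f k" by auto
    moreover have "f (k mod d) = f k" by (rule periodic_mod[where g = f, OF period])
    moreover have "k mod d \<in> {0..<d}" using d by auto
    ultimately show "y \<in> f ` {0..<d}" by (metis image_eqI)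
  qed
  then have "n \<le> card (f ` {0..<d})" unfolding n_def by (simp add: card_mono)
  also have "\<dots> \<le> card {0..<d}" by (rule card_image_le) simp
  finally have "d = int n" using d by simp
  with period show ?thesis unfolding n_def by simp
qed

lemma hat_in_Dom: "N > 0 \<Longrightarrow> hat N x \<in> Dom N"
  unfolding hat_def Dom_def
  using pos_mod_bound[of "2 * N + 1" "fst x + N"] pos_mod_bound[of "2 * N + 1" "snd x + N"]
    pos_mod_sign[of "2 * N + 1" "fst x + N"] pos_mod_sign[of "2 * N + 1" "snd x + N"]
  by (auto simp: abs_le_iff)

lemma hat_eq_self: "N > 0 \<Longrightarrow> x \<in> Dom N \<Longrightarrow> hat N x = x"
  unfolding hat_def Dom_def by (cases x) (auto simp: abs_le_iff)

lemma hat_lpt_hat: "hat N (lpt (hat N x) l p) = hat N (lpt x l p)"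
  unfolding hat_def lpt_def by (simp add: mod_simps algebra_simps)

lemma lpt_lpt: "lpt (lpt a k p) l p = lpt a (k + l) p"
  unfolding lpt_def by (simp add: algebra_simps)

lemma finite_Dom: "finite (Dom N)"
proof -
  have "Dom N \<subseteq> {- N..N} \<times> {- N..N}" unfolding Dom_def by (auto simp: abs_le_iff)
  then show ?thesis by (rule finite_subset) auto
qed

lemma hat_lpt_add_ncls:
  assumes "N > 0"
  shows "hat N (lpt a (k + int (ncls N a p)) p) = hat N (lpt a k p)"
proof -
  let ?f = "\<lambda>k. hat N (lpt a k p)"
  have card: "ncls N a p = card (range ?f)" unfolding ncls_def by (simp add: full_SetCompr_eq)
  have "range ?f \<subseteq> Dom N" using hat_in_Dom[OF assms] by blast
  then have fin: "finite (range ?f)" using finite_Dom finite_subset by blast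
  have f_add: "?f (i + l) = hat N (lpt (?f i) l p)" for i l
    by (simp only: hat_lpt_hat lpt_lpt)
  have shift: "?f (i + l) = ?f (j + l)" if "?f i = ?f j" for i j l
    unfolding f_add using that by (rule arg_cong)
  show ?thesis using periodic_card_range[of ?f k, OF fin shift] unfolding card .
qed

lemma rho_add_ncls: "N > 0 \<Longrightarrow> rho N a p (k + int (ncls N a p)) = rho N a p k"
  unfolding rho_def by (simp add: hat_lpt_add_ncls)

lemma rho_mod_ncls: "N > 0 \<Longrightarrow> rho N a p (k mod int (ncls N a p)) = rho N a p k"
  by (rule periodic_mod) (simp add: rho_add_ncls)

lemma ncls_pos:
  assumes "N > 0"
  shows "0 < ncls N a p"
proof -
  have "{hat N (lpt a k p) | k. True} \<subseteq> Dom N" using hat_in_Dom[OF assms] by blast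
  then have "finite {hat N (lpt a k p) | k. True}" using finite_Dom finite_subset by blast
  moreover have "{hat N (lpt a k p) | k. True} \<noteq> {}" by blast
  ultimately show ?thesis unfolding ncls_def using card_gt_0_iff by blast
qed

lemma rho_pos:
  assumes "p \<noteq> (0, 0)" "nsq p < nsq (hat N (lpt a k p))"
  shows "0 < rho N a p k"
proof -
  have "0 < nsq p" using assms(1) unfolding nsq_def by (cases p) (auto simp: sum_power2_gt_zero_iff)
  then show ?thesis using assms(2) unfolding rho_def by (simp add: frac_less2)
qed

text \<open>Positivity of \<open>\<rho>\<close> on \<open>1, \<dots>, n - 1\<close> propagates to every \<open>k \<noteq> 0\<close> with
  \<open>a + k p \<in> D\<close>: if \<open>n\<close> divided such a \<open>k\<close>, then \<open>a + k p\<close> and \<open>a\<close> would be distinct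
  points of \<open>D\<close> with the same reduction.\<close>
lemma rho_pos_of_lpt_in_Dom:
  assumes N: "N > 0" and p: "p \<noteq> (0, 0)" and a: "a \<in> Dom N"
    and pos: "\<And>k. 0 < k \<Longrightarrow> k < int (ncls N a p) \<Longrightarrow> 0 < rho N a p k"
    and k: "lpt a k p \<in> Dom N" "k \<noteq> 0"
  shows "0 < rho N a p k"
proof -
  define r where "r = k mod int (ncls N a p)"
  have "r \<noteq> 0"
  proof
    assume "r = 0"
    moreover have "hat N (lpt a r p) = hat N (lpt a k p)"
      unfolding r_def by (rule periodic_mod[where g = "\<lambda>k. hat N (lpt a k p)", OF hat_lpt_add_ncls[OF N]])
    ultimately have "hat N (lpt a k p) = hat N (lpt a 0 p)" by simp
    then have "lpt a k p = a" using hat_eq_self[OF N k(1)] hat_eq_self[OF N a] by (simp add: lpt_def)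
    then have "k * fst p = 0" "k * snd p = 0" unfolding lpt_def by (auto simp: prod_eq_iff)
    then show False using k(2) p by (cases p) auto
  qed
  moreover have "0 \<le> r" "r < int (ncls N a p)"
    using ncls_pos[OF N, of a p] unfolding r_def by simp_all
  ultimately have "0 < rho N a p r" using pos by simp
  then show ?thesis unfolding r_def rho_mod_ncls[OF N] .
qed

lemma finite_lpt_in_Dom:
  assumes "p \<noteq> (0, 0)"
  shows "finite {k. lpt a k p \<in> Dom N}"
proof -
  define B where "B = N + \<bar>fst a\<bar> + \<bar>snd a\<bar>"
  have bound: "\<bar>k\<bar> \<le> B" if "lpt a k p \<in> Dom N" for k
  proof -
    have k: "\<bar>fst a + k * fst p\<bar> \<le> N" "\<bar>snd a + k * snd p\<bar> \<le> N"
      using that unfolding lpt_def Dom_def by auto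
    have "\<bar>k\<bar> \<le> \<bar>k * fst p\<bar> \<or> \<bar>k\<bar> \<le> \<bar>k * snd p\<bar>"
      using assms by (cases p) (auto simp: abs_mult mult_le_cancel_left1)
    then show ?thesis using k unfolding B_def by auto
  qed
  have "{k. lpt a k p \<in> Dom N} \<subseteq> {- B .. B}"
  proof
    fix k assume "k \<in> {k. lpt a k p \<in> Dom N}"
    then have "\<bar>k\<bar> \<le> B" using bound by simp
    then show "k \<in> {- B .. B}" using abs_le_iff[of k B] by simp
  qed
  then show ?thesis by (rule finite_subset) simp
qed

lemma abs_add_mult_le_between:
  fixes x q k1 k2 k N :: int
  assumes "\<bar>x + k1 * q\<bar> \<le> N" "\<bar>x + k2 * q\<bar> \<le> N" "k1 \<le> k" "k \<le> k2"
  shows "\<bar>x + k * q\<bar> \<le> N"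
proof (cases "0 \<le> q")
  case True
  then have "k1 * q \<le> k * q" "k * q \<le> k2 * q" using assms by (auto intro: mult_right_mono)
  then show ?thesis using assms by (auto simp: abs_le_iff)
next
  case False
  then have "k * q \<le> k1 * q" "k2 * q \<le> k * q" using assms by (auto intro: mult_right_mono_neg)
  then show ?thesis using assms by (auto simp: abs_le_iff)
qed

lemma lpt_in_Dom_between:
  assumes "lpt a k1 p \<in> Dom N" "lpt a k2 p \<in> Dom N" "k1 \<le> k" "k \<le> k2"
  shows "lpt a k p \<in> Dom N"
  using assms abs_add_mult_le_between[of "fst a" k1 "fst p" N k2 k]
    abs_add_mult_le_between[of "snd a" k1 "snd p" N k2 k]
  unfolding lpt_def Dom_def by auto

lemma gal_bounds:
  assumes p: "p \<noteq> (0, 0)" and "lpt a 1 p \<in> Dom N" "lpt a (- 1) p \<in> Dom N"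
  shows "1 \<le> gal_m1 N a p" "1 \<le> gal_m2 N a p"
    and "- gal_m1 N a p \<le> k \<Longrightarrow> k \<le> gal_m2 N a p \<Longrightarrow> lpt a k p \<in> Dom N"
proof -
  define G where "G = {k. lpt a k p \<in> Dom N}"
  have fin: "finite G" unfolding G_def by (rule finite_lpt_in_Dom[OF p])
  have G: "1 \<in> G" "- 1 \<in> G" using assms unfolding G_def by auto
  then show "1 \<le> gal_m1 N a p" "1 \<le> gal_m2 N a p"
    unfolding gal_m1_def gal_m2_def G_def[symmetric] using Min_le[OF fin] Max_ge[OF fin] by force+
  assume "- gal_m1 N a p \<le> k" "k \<le> gal_m2 N a p"
  moreover have "Min G \<in> G" "Max G \<in> G" using Min_in[OF fin] Max_in[OF fin] G by auto
  ultimately show "lpt a k p \<in> Dom N"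
    using lpt_in_Dom_between[of a "Min G" p N "Max G" k]
    unfolding gal_m1_def gal_m2_def G_def[symmetric] by (simp add: G_def)
qed

lemma cyc_next_eq_mod: "i < n \<Longrightarrow> (i + 1) mod n = cyc_next n i"
  unfolding cyc_next_def by (auto simp: mod_if)

lemma cyc_prev_eq_mod: "i < n \<Longrightarrow> (i + n - 1) mod n = cyc_prev n i"
  unfolding cyc_prev_def by (cases "i = 0") (auto simp: mod_if)

lemma zeitlin_mat_eq:
  assumes N: "N > 0" and "n = ncls N a p"
  shows "zeitlin_mat N a p = mat n n (\<lambda>(i, j). cyc_skew n i j * rho N a p (int j))"
proof -
  have rho_mod: "rho N a p (k mod int n) = rho N a p k" for k
    unfolding assms(2) by (rule rho_mod_ncls[OF N])
  have next_eq: "rho N a p (int i + 1) = rho N a p (int (cyc_next n i))" if "i < n" for i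
    using rho_mod[of "int i + 1"] unfolding cyc_next_eq_mod[OF that, symmetric] by (simp add: of_nat_mod ac_simps)
  have prev_eq: "rho N a p (int i - 1) = rho N a p (int (cyc_prev n i))" if "i < n" for i
  proof -
    have "int (cyc_prev n i) = int ((i + n - 1) mod n)" using cyc_prev_eq_mod[OF that] by simp
    also have "\<dots> = (int i - 1) mod int n"
      using that by (simp add: of_nat_mod of_nat_diff) (metis diff_add_eq mod_add_self2)
    finally show ?thesis using rho_mod[of "int i - 1"] by simp
  qed
  have entry: "(if j = (i + 1) mod n then rho N a p (int i + 1)
      else if j = (i + n - 1) mod n then - rho N a p (int i - 1) else 0)
      = cyc_skew n i j * rho N a p (int j)" if "i < n" for i j
    unfolding cyc_next_eq_mod[OF that] cyc_prev_eq_mod[OF that] next_eq[OF that] prev_eq[OF that]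
      cyc_skew_def by auto
  show ?thesis
    unfolding zeitlin_mat_def Let_def assms(2)[symmetric]
    by (rule eq_matI) (simp_all only: index_mat dim_row_mat dim_col_mat case_prod_conv entry)
qed

lemma galerkin_mat_eq:
  "galerkin_mat N a p = mat (nat (gal_m1 N a p + gal_m2 N a p + 1)) (nat (gal_m1 N a p + gal_m2 N a p + 1))
     (\<lambda>(i, j). path_skew i j * rho N a p (int j - gal_m1 N a p))"
  unfolding galerkin_mat_def Let_def by (rule eq_matI) (auto simp: path_skew_def algebra_simps)

section \<open>Eigenvalues of the class matrices\<close>

lemma zeitlin_eigenvalue_gt:
  assumes N: "N > 0" and n: "3 \<le> ncls N a p"
    and pos: "\<And>k. 0 < k \<Longrightarrow> k < int (ncls N a p) \<Longrightarrow> 0 < rho N a p k"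
    and d: "d = 1 \<or> d = - 1" and "0 < c"
    and c: "c\<^sup>2 = - rho N a p d * (rho N a p 0 + rho N a p (2 * d))"
  shows "\<exists>l>c. eigenvalue (zeitlin_mat N a p) l"
proof -
  define n where "n = ncls N a p"
  define \<sigma> where "\<sigma> j = rho N a p (int j)" for j
  define k where "k = (if d = 1 then 1 else n - 1)"
  have n3: "3 \<le> n" using n unfolding n_def .
  have "c\<^sup>2 = - \<sigma> k * (\<sigma> (cyc_prev n k) + \<sigma> (cyc_next n k))"
    using d
  proof
    assume "d = 1"
    then have "cyc_prev n k = 0" "cyc_next n k = 2"
      using n3 unfolding k_def by (simp_all add: cyc_prev_def cyc_next_def numeral_2_eq_2)
    then show ?thesis using c \<open>d = 1\<close> unfolding \<sigma>_def k_def by simp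
  next
    assume "d = - 1"
    then have "cyc_prev n k = n - 2" "cyc_next n k = 0"
      using n3 unfolding k_def by (auto simp: cyc_prev_def cyc_next_def)
    moreover have shift: "rho N a p (int (n - i)) = rho N a p (- int i)" if "i \<le> n" for i
      using rho_add_ncls[OF N, of a p "- int i"] that unfolding n_def by (simp add: of_nat_diff)
    ultimately show ?thesis
      using c \<open>d = - 1\<close> n3 shift[of 1] shift[of 2] unfolding \<sigma>_def k_def by simp
  qed
  moreover have "k = 1 \<or> k = n - 1" unfolding k_def by simp
  moreover have "0 < \<sigma> j" if "0 < j" "j < n" for j using pos that unfolding \<sigma>_def n_def by simp
  ultimately have "\<exists>l>c. eigenvalue (mat n n (\<lambda>(i, j). cyc_skew n i j * \<sigma> j)) l"
    using cyc_skew_eigenvalue_gt[OF n3 _ \<open>0 < c\<close>] by blast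
  then show ?thesis unfolding zeitlin_mat_eq[OF N n_def] \<sigma>_def .
qed

lemma galerkin_eigenvalue_gt:
  assumes p: "p \<noteq> (0, 0)" and N: "N > 0" and a: "a \<in> Dom N"
    and a1: "lpt a 1 p \<in> Dom N" and a2: "lpt a (- 1) p \<in> Dom N" and n: "3 \<le> ncls N a p"
    and pos: "\<And>k. 0 < k \<Longrightarrow> k < int (ncls N a p) \<Longrightarrow> 0 < rho N a p k"
    and d: "d = 1 \<or> d = - 1" and "0 < c"
    and c: "c\<^sup>2 = - rho N a p d * (rho N a p 0 + rho N a p (2 * d))"
  shows "\<exists>l>c. eigenvalue (galerkin_mat N a p) l"
proof -
  define m1 where "m1 = gal_m1 N a p"
  define m2 where "m2 = gal_m2 N a p"
  define s where "s = nat (m1 + m2 + 1)"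
  define i0 where "i0 = nat m1"
  define k where "k = nat (m1 + d)"
  define \<sigma> where "\<sigma> j = rho N a p (int j - m1)" for j
  have m: "1 \<le> m1" "1 \<le> m2" using gal_bounds[OF p a1 a2] unfolding m1_def m2_def by auto
  have i0: "0 < i0" "i0 + 1 < s" using m unfolding s_def i0_def by auto
  have \<sigma>_pos: "0 < \<sigma> j" if "j < s" "j \<noteq> i0" for j
  proof -
    have "lpt a (int j - m1) p \<in> Dom N"
      using gal_bounds(3)[OF p a1 a2, of "int j - m1"] that m unfolding s_def m1_def m2_def by auto
    moreover have "int j - m1 \<noteq> 0" using that m unfolding i0_def by auto
    ultimately show ?thesis unfolding \<sigma>_def using rho_pos_of_lpt_in_Dom[OF N p a pos] by blast
  qed
  have k: "k = i0 + 1 \<or> k + 1 = i0" using d m unfolding k_def i0_def by auto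
  have \<sigma>_k: "\<sigma> k = rho N a p d" using d m unfolding \<sigma>_def k_def by auto
  have \<sigma>_i0: "\<sigma> i0 = rho N a p 0" using m unfolding \<sigma>_def i0_def by simp
  have far: "\<sigma> j = rho N a p (2 * d)" if "j < s" "j \<noteq> i0" "j = k + 1 \<or> j + 1 = k" for j
    using that d m unfolding \<sigma>_def k_def i0_def by (auto simp: nat_eq_iff2)
  have r: "0 < rho N a p (2 * d)"
    using d
  proof
    assume "d = 1"
    then show ?thesis using pos[of 2] n by simp
  next
    assume "d = - 1"
    then have "rho N a p (2 * d) = rho N a p (- 2 + int (ncls N a p))"
      using rho_add_ncls[OF N, of a p "- 2"] by simp
    then show ?thesis using pos[of "- 2 + int (ncls N a p)"] n by simp
  qed
  have c_\<sigma>: "c\<^sup>2 = - \<sigma> k * (\<sigma> i0 + rho N a p (2 * d))" unfolding \<sigma>_k \<sigma>_i0 by (rule c)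
  have "\<exists>l>c. eigenvalue (mat s s (\<lambda>(i, j). path_skew i j * \<sigma> j)) l"
    by (rule path_skew_eigenvalue_gt[where \<sigma> = \<sigma> and r = "rho N a p (2 * d)"])
       (fact i0 \<sigma>_pos \<open>0 < c\<close> k c_\<sigma> r far)+
  then show ?thesis unfolding galerkin_mat_eq s_def m1_def m2_def \<sigma>_def .
qed

theorem theorem2:
  fixes p a :: "int \<times> int" and N :: int
  assumes "p \<noteq> (0, 0)"
    and "N > 0"
    and "a \<in> Dom N"
    and "nsq a < nsq p"
    and "lpt a 1 p \<in> Dom N" and "lpt a (-1) p \<in> Dom N"
    and "ncls N a p \<ge> 3"
    and "\<forall>k \<in> {1 .. int (ncls N a p) - 1}. nsq (hat N (lpt a k p)) > nsq p"
  shows "(0 < - rho N a p 1 * (rho N a p 0 + rho N a p 2) \<longrightarrow>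
           (\<exists>l1 l2. l1 > sqrt (- rho N a p 1 * (rho N a p 0 + rho N a p 2))
                  \<and> l2 > sqrt (- rho N a p 1 * (rho N a p 0 + rho N a p 2))
                  \<and> eigenvalue (galerkin_mat N a p) l1
                  \<and> eigenvalue (zeitlin_mat N a p) l2))
       \<and> (0 < - rho N a p (int (ncls N a p) - 1)
                * (rho N a p 0 + rho N a p (int (ncls N a p) - 2)) \<longrightarrow>
           (\<exists>l1 l2. l1 > sqrt (- rho N a p (int (ncls N a p) - 1)
                               * (rho N a p 0 + rho N a p (int (ncls N a p) - 2)))
                  \<and> l2 > sqrt (- rho N a p (int (ncls N a p) - 1)
                               * (rho N a p 0 + rho N a p (int (ncls N a p) - 2)))
                  \<and> eigenvalue (galerkin_mat N a p) l1
                  \<and> eigenvalue (zeitlin_mat N a p) l2))"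
proof -
  let ?\<rho> = "rho N a p" and ?n = "int (ncls N a p)"
  have pos: "\<And>k. 0 < k \<Longrightarrow> k < ?n \<Longrightarrow> 0 < ?\<rho> k"
    using assms(8) rho_pos[OF assms(1)] by auto
  have eig: "0 < - ?\<rho> d * (?\<rho> 0 + ?\<rho> (2 * d)) \<longrightarrow>
      (\<exists>l1 l2. l1 > sqrt (- ?\<rho> d * (?\<rho> 0 + ?\<rho> (2 * d)))
             \<and> l2 > sqrt (- ?\<rho> d * (?\<rho> 0 + ?\<rho> (2 * d)))
             \<and> eigenvalue (galerkin_mat N a p) l1 \<and> eigenvalue (zeitlin_mat N a p) l2)"
    if d: "d = 1 \<or> d = - 1" for d
  proof
    define c where "c = sqrt (- ?\<rho> d * (?\<rho> 0 + ?\<rho> (2 * d)))"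
    assume "0 < - ?\<rho> d * (?\<rho> 0 + ?\<rho> (2 * d))"
    then have c: "0 < c" "c\<^sup>2 = - ?\<rho> d * (?\<rho> 0 + ?\<rho> (2 * d))" unfolding c_def by simp_all
    show "\<exists>l1 l2. l1 > c \<and> l2 > c
        \<and> eigenvalue (galerkin_mat N a p) l1 \<and> eigenvalue (zeitlin_mat N a p) l2"
      using galerkin_eigenvalue_gt[OF assms(1-3,5-7) pos d c] zeitlin_eigenvalue_gt[OF assms(2,7) pos d c]
      by blast
  qed
  have "?\<rho> (?n - 1) = ?\<rho> (- 1)" "?\<rho> (?n - 2) = ?\<rho> (- 2)"
    using rho_add_ncls[OF assms(2), of a p "- 1"] rho_add_ncls[OF assms(2), of a p "- 2"] by simp_all
  then show ?thesis using eig[of 1] eig[of "- 1"] by simp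
qed

end
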